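(* Let $R$ be a commutative ring and $\mathfrak{a}\subseteq R$ an ideal. (a) If some power $\mathfrak{a}^n$ ($n\geq1$) is finitely generated, or if $\mathfrak{a}$ is generated by idempotents, then $\Gamma_\mathfrak{a}=\overline{\Gamma}_\mathfrak{a}$. (b) If $R$ is noetherian or absolutely flat (von Neumann regular), then $\Gamma_\mathfrak{a}=\overline{\Gamma}_\mathfrak{a}$. (c) If $\mathfrak{b}\subseteq R$ is an ideal with $\mathfrak{a}\subseteq\mathfrak{b}\subseteq\sqrt{\mathfrak{a}}$ and $\Gamma_\mathfrak{b}=\overline{\Gamma}_\mathfrak{b}$, then $\Gamma_\mathfrak{a}=\overline{\Gamma}_\mathfrak{a}$. (d) If $M$ is a noetherian $R$-module, then $\Gamma_\mathfrak{a}(M)=\overline{\Gamma}_\mathfrak{a}(M)$.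
   Context: For an $R$-module $M$: $\Gamma_\mathfrak{a}(M)=\{x\in M\mid \exists n\in\mathbb{N}:\mathfrak{a}^n\subseteq(0:_Rx)\}$ and $\overline{\Gamma}_\mathfrak{a}(M)=\{x\in M\mid \mathfrak{a}\subseteq\sqrt{(0:_Rx)}\}$; $\Gamma_\mathfrak{a}=\overline{\Gamma}_\mathfrak{a}$ means equality for every $R$-module $M$. *)

theory Defs
  imports "HOL-Algebra.Algebra"
begin

definition ideal_power :: "('a, 'b) ring_scheme \<Rightarrow> 'a set \<Rightarrow> nat \<Rightarrow> 'a set" where
  "ideal_power R I n = I [^]\<^bsub>ideals_set R\<^esub> n"

definition radical :: "('a, 'b) ring_scheme \<Rightarrow> 'a set \<Rightarrow> 'a set" where
  "radical R I = {r \<in> carrier R. \<exists>n::nat. r [^]\<^bsub>R\<^esub> n \<in> I}"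

definition annihilator :: "('a, 'b) ring_scheme \<Rightarrow> ('a, 'm, 'd) module_scheme \<Rightarrow> 'm \<Rightarrow> 'a set" where
  "annihilator R M x = {r \<in> carrier R. r \<odot>\<^bsub>M\<^esub> x = \<zero>\<^bsub>M\<^esub>}"

definition Gamma :: "('a, 'b) ring_scheme \<Rightarrow> 'a set \<Rightarrow> ('a, 'm, 'd) module_scheme \<Rightarrow> 'm set" where
  "Gamma R I M = {x \<in> carrier M. \<exists>n::nat. ideal_power R I n \<subseteq> annihilator R M x}"

definition Gamma_bar :: "('a, 'b) ring_scheme \<Rightarrow> 'a set \<Rightarrow> ('a, 'm, 'd) module_scheme \<Rightarrow> 'm set" where
  "Gamma_bar R I M = {x \<in> carrier M. I \<subseteq> radical R (annihilator R M x)}"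

definition finitely_generated_ideal :: "('a, 'b) ring_scheme \<Rightarrow> 'a set \<Rightarrow> bool" where
  "finitely_generated_ideal R I \<longleftrightarrow> (\<exists>S. S \<subseteq> carrier R \<and> finite S \<and> I = Idl\<^bsub>R\<^esub> S)"

definition generated_by_idempotents :: "('a, 'b) ring_scheme \<Rightarrow> 'a set \<Rightarrow> bool" where
  "generated_by_idempotents R I \<longleftrightarrow>
     (\<exists>E. E \<subseteq> carrier R \<and> (\<forall>e\<in>E. e \<otimes>\<^bsub>R\<^esub> e = e) \<and> I = Idl\<^bsub>R\<^esub> E)"

text \<open>Absolutely flat = von Neumann regular (for commutative rings).\<close>
definition von_neumann_regular :: "('a, 'b) ring_scheme \<Rightarrow> bool" where
  "von_neumann_regular R \<longleftrightarrow> (\<forall>x\<in>carrier R. \<exists>y\<in>carrier R. x = x \<otimes>\<^bsub>R\<^esub> x \<otimes>\<^bsub>R\<^esub> y)"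

definition gen_submodule :: "('a, 'b) ring_scheme \<Rightarrow> ('a, 'm, 'd) module_scheme \<Rightarrow> 'm set \<Rightarrow> 'm set" where
  "gen_submodule R M S = \<Inter>{N. submodule N R M \<and> S \<subseteq> N}"

definition noetherian_module :: "('a, 'b) ring_scheme \<Rightarrow> ('a, 'm, 'd) module_scheme \<Rightarrow> bool" where
  "noetherian_module R M \<longleftrightarrow> module R M \<and>
     (\<forall>N. submodule N R M \<longrightarrow> (\<exists>S. S \<subseteq> carrier M \<and> finite S \<and> N = gen_submodule R M S))"

end

theory Submission
  imports Defs
begin

text \<open>Always \<open>\<Gamma>\<^sub>a \<subseteq> \<Gamma>\<^sub>a-bar\<close>, since \<open>r \<in> a\<close> gives \<open>r\<^sup>n \<in> a\<^sup>n\<close>. For the converse one has to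
  pass from \<open>a \<subseteq> \<surd>(0 : x)\<close> to \<open>a\<^sup>n \<subseteq> (0 : x)\<close>. If \<open>(s\<^sub>1, \<dots>, s\<^sub>k) \<subseteq> \<surd>A\<close>, then a power
  of \<open>(s\<^sub>1, \<dots>, s\<^sub>k)\<close> lies in \<open>A\<close>, by induction on \<open>k\<close> using \<open>(I + J)\<^sup>m\<^sup>+\<^sup>n \<subseteq> A\<close> whenever
  \<open>I\<^sup>m, J\<^sup>n \<subseteq> A\<close>; this settles the case of a finitely generated power \<open>a\<^sup>n\<close> and hence of
  noetherian rings. An element with \<open>r = r\<^sup>2y\<close> (an idempotent, or any element of a von
  Neumann regular ring) satisfies \<open>r = r\<^sup>k\<^sup>+\<^sup>1y\<^sup>k\<close>, so it lies in every ideal whose radical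
  contains it. For a noetherian module, \<open>a x\<close> is generated by some \<open>t\<^sub>1x, \<dots>, t\<^sub>kx\<close> with
  \<open>t\<^sub>i \<in> a\<close>, whence \<open>a \<subseteq> (t\<^sub>1, \<dots>, t\<^sub>k) + (0 : x)\<close> and again a power of \<open>a\<close> annihilates \<open>x\<close>.
  Part (c) follows from \<open>\<Gamma>\<^sub>b \<subseteq> \<Gamma>\<^sub>a\<close> and \<open>\<Gamma>\<^sub>a-bar \<subseteq> \<Gamma>\<^sub>b-bar\<close>.\<close>

context cring
begin

lemma ideals_set_carrier: "carrier (ideals_set R) = {I. ideal I R}"
  by (simp add: ideals_set_def)

lemma ideals_set_mult: "I \<otimes>\<^bsub>ideals_set R\<^esub> J = I \<cdot> J"
  by (simp add: ideals_set_def)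

lemma ideal_power_0 [simp]: "ideal_power R I 0 = carrier R"
  by (simp add: ideal_power_def ideals_set_def)

lemma ideal_power_Suc: "ideal_power R I (Suc n) = ideal_power R I n \<cdot> I"
  by (simp add: ideal_power_def ideals_set_def)

lemma ideal_power_is_ideal: "ideal I R \<Longrightarrow> ideal (ideal_power R I n) R"
  by (induct n) (simp_all add: ideal_power_Suc oneideal ideal_prod_is_ideal)

lemma ideal_power_1: "ideal I R \<Longrightarrow> ideal_power R I 1 = I"
  using ideal_prod_commute[OF oneideal, of I] ideal_prod_one by (simp add: ideal_power_Suc)

lemma ideal_power_add:
  "ideal I R \<Longrightarrow> ideal_power R I (m + n) = ideal_power R I m \<cdot> ideal_power R I n"
  using comm_monoid.axioms(1)[OF ideals_set_is_comm_monoid]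
  by (simp add: ideal_power_def monoid.nat_pow_mult ideals_set_carrier flip: ideals_set_mult)

lemma ideal_power_mult:
  "ideal I R \<Longrightarrow> ideal_power R (ideal_power R I m) n = ideal_power R I (m * n)"
  using comm_monoid.axioms(1)[OF ideals_set_is_comm_monoid]
  by (simp add: ideal_power_def monoid.nat_pow_pow ideals_set_carrier)

lemma ideal_power_antimono:
  assumes "ideal I R" and "m \<le> n"
  shows "ideal_power R I n \<subseteq> ideal_power R I m"
proof -
  have "ideal_power R I n = ideal_power R I m \<cdot> ideal_power R I (n - m)"
    using ideal_power_add[OF assms(1), of m "n - m"] assms(2) by simp
  then show ?thesis
    using ideal_prod_inter[OF ideal_power_is_ideal ideal_power_is_ideal] assms(1) by blast
qed

lemma nat_pow_mem_ideal_power: "ideal I R \<Longrightarrow> r \<in> I \<Longrightarrow> r [^] n \<in> ideal_power R I n"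
  by (induct n) (simp_all add: ideal_power_Suc ideal_prod.prod ideal.Icarr)

lemma ideal_prod_mono: "I \<subseteq> I' \<Longrightarrow> J \<subseteq> J' \<Longrightarrow> I \<cdot> J \<subseteq> I' \<cdot> J'"
proof
  fix s assume "I \<subseteq> I'" "J \<subseteq> J'" and "s \<in> I \<cdot> J"
  from \<open>s \<in> I \<cdot> J\<close> show "s \<in> I' \<cdot> J'"
    by (induct s rule: ideal_prod.induct) (use \<open>I \<subseteq> I'\<close> \<open>J \<subseteq> J'\<close> in \<open>auto intro: ideal_prod.intros\<close>)
qed

lemma ideal_power_mono: "I \<subseteq> J \<Longrightarrow> ideal_power R I n \<subseteq> ideal_power R J n"
  by (induct n) (simp_all add: ideal_power_Suc ideal_prod_mono)

lemma ideal_prod_subset: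
  assumes "ideal K R" and "\<And>i j. i \<in> I \<Longrightarrow> j \<in> J \<Longrightarrow> i \<otimes> j \<in> K"
  shows "I \<cdot> J \<subseteq> K"
proof
  fix s assume "s \<in> I \<cdot> J"
  then show "s \<in> K"
    by (induct s rule: ideal_prod.induct)
       (use assms in \<open>auto intro: additive_subgroup.a_closed[OF ideal.axioms(1)]\<close>)
qed

lemma set_add_subset_ideal:
  "ideal I R \<Longrightarrow> ideal J R \<Longrightarrow> ideal K R \<Longrightarrow> I \<subseteq> K \<Longrightarrow> J \<subseteq> K \<Longrightarrow> I <+> J \<subseteq> K"
  by (simp add: union_genideal[symmetric] genideal_minimal)

text \<open>Every product of \<open>m + n\<close> elements of \<open>I + J\<close> expands into products containing
  \<open>m\<close> factors from \<open>I\<close> or \<open>n\<close> factors from \<open>J\<close>; the induction runs over the number \<open>k\<close>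
  of factors not yet expanded.\<close>
lemma ideal_power_set_add_subset:
  assumes I: "ideal I R" and J: "ideal J R" and A: "ideal A R"
    and IA: "ideal_power R I m \<subseteq> A" and JA: "ideal_power R J n \<subseteq> A"
  shows "ideal_power R (I <+> J) (m + n) \<subseteq> A"
proof -
  interpret Id: comm_monoid "ideals_set R" by (rule ideals_set_is_comm_monoid)
  have K: "ideal (I <+> J) R" by (rule add_ideals[OF I J])
  have carr: "I \<in> carrier (ideals_set R)" "J \<in> carrier (ideals_set R)"
    "I <+> J \<in> carrier (ideals_set R)"
    using I J K by (simp_all add: ideals_set_carrier)
  let ?X = "\<lambda>p q k. ideal_power R I p \<cdot> ideal_power R J q \<cdot> ideal_power R (I <+> J) k"
  have X: "ideal (?X p q k) R" for p q k
    using I J K by (intro ideal_prod_is_ideal ideal_power_is_ideal)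
  have "?X p q k \<subseteq> A" if "m + n \<le> p + q + k" for p q k
    using that
  proof (induction k arbitrary: p q)
    case 0
    then consider "m \<le> p" | "n \<le> q" by linarith
    then have "ideal_power R I p \<cdot> ideal_power R J q \<subseteq> A"
      using ideal_prod_inter[OF ideal_power_is_ideal ideal_power_is_ideal, OF I J]
        ideal_power_antimono[OF I] ideal_power_antimono[OF J] IA JA by cases blast+
    then show ?case
      using ideal_prod_one[OF ideal_prod_is_ideal[OF ideal_power_is_ideal ideal_power_is_ideal]] I J
      by simp
  next
    case (Suc k)
    have "?X p q (Suc k) = ?X p q k \<cdot> (I <+> J)"
      using carr unfolding ideal_power_def ideals_set_mult[symmetric]
      by (simp add: Id.m_ac Id.nat_pow_Suc)
    also have "\<dots> = ?X p q k \<cdot> I <+> ?X p q k \<cdot> J"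
      by (rule ideal_prod_distr(1)[OF X I J])
    also have "\<dots> = ?X (Suc p) q k <+> ?X p (Suc q) k"
      using carr unfolding ideal_power_def ideals_set_mult[symmetric]
      by (simp add: Id.m_ac Id.nat_pow_Suc)
    also have "\<dots> \<subseteq> A"
      using Suc by (intro set_add_subset_ideal X A) simp_all
    finally show ?case .
  qed
  from this[of 0 0 "m + n"] show ?thesis
    using ideal_prod_one[OF oneideal] ideal_prod_commute[OF oneideal ideal_power_is_ideal[OF K]]
      ideal_prod_one[OF ideal_power_is_ideal[OF K]]
    by simp
qed

lemma radical_mono: "I \<subseteq> J \<Longrightarrow> radical R I \<subseteq> radical R J"
  unfolding radical_def by blast

lemma radical_radical_subset: "radical R (radical R A) \<subseteq> radical R A"
proof
  fix r assume "r \<in> radical R (radical R A)"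
  then obtain n m :: nat where "r \<in> carrier R" "(r [^] n) [^] m \<in> A"
    unfolding radical_def by blast
  then show "r \<in> radical R A"
    unfolding radical_def by (auto simp: nat_pow_pow)
qed

lemma cgenideal_power_subset: "a \<in> carrier R \<Longrightarrow> ideal_power R (PIdl a) k \<subseteq> PIdl (a [^] k)"
proof (induct k)
  case 0
  then show ?case
    using cgenideal_self[of "\<one>"] cgenideal_eq_genideal genideal_one by simp
next
  case (Suc k)
  have "ideal_power R (PIdl a) (Suc k) \<subseteq> (PIdl (a [^] k)) \<cdot> (PIdl a)"
    using Suc by (simp add: ideal_power_Suc ideal_prod_mono)
  also have "\<dots> \<subseteq> PIdl (a [^] Suc k)"
  proof (rule ideal_prod_subset)
    show "ideal (PIdl (a [^] Suc k)) R"
      using Suc by (simp add: cgenideal_ideal)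
    fix i j assume "i \<in> PIdl (a [^] k)" "j \<in> PIdl a"
    then obtain x y where "x \<in> carrier R" "y \<in> carrier R" "i = x \<otimes> a [^] k" "j = y \<otimes> a"
      unfolding cgenideal_def by blast
    then show "i \<otimes> j \<in> PIdl (a [^] Suc k)"
      using Suc unfolding cgenideal_def by (auto intro!: exI[of _ "x \<otimes> y"] simp: m_ac)
  qed
  finally show ?case .
qed

lemma genideal_power_subset_of_radical:
  assumes A: "ideal A R" and "finite S" and "S \<subseteq> carrier R" and "S \<subseteq> radical R A"
  shows "\<exists>N. ideal_power R (Idl S) N \<subseteq> A"
  using assms(2-)
proof (induct S rule: finite_induct)
  case empty
  then show ?case
    using ideal_power_1[OF genideal_ideal] genideal_minimal[OF A] by (metis empty_subsetI)
next
  case (insert s S)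
  then obtain N where N: "ideal_power R (Idl S) N \<subseteq> A" by auto
  from insert obtain k :: nat where s: "s \<in> carrier R" "s [^] k \<in> A"
    unfolding radical_def by auto
  have P: "ideal (PIdl s) R" and G: "ideal (Idl S) R"
    using s insert by (simp_all add: cgenideal_ideal genideal_ideal)
  have "ideal_power R (PIdl s) k \<subseteq> A"
    using cgenideal_power_subset[OF s(1)] cgenideal_minimal[OF A s(2)] by blast
  then have "ideal_power R (PIdl s <+> Idl S) (k + N) \<subseteq> A"
    by (rule ideal_power_set_add_subset[OF P G A _ N])
  moreover have "Idl (insert s S) \<subseteq> PIdl s <+> Idl S"
  proof (rule genideal_minimal[OF add_ideals[OF P G]])
    have "PIdl s \<union> Idl S \<subseteq> PIdl s <+> Idl S"
      unfolding union_genideal[OF P G, symmetric] using P G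
      by (intro genideal_self) (auto dest: ideal.Icarr)
    then show "insert s S \<subseteq> PIdl s <+> Idl S"
      using cgenideal_self[OF s(1)] genideal_self[of S] insert by blast
  qed
  ultimately show ?case
    using ideal_power_mono by blast
qed

lemma regular_mem_radical_imp_mem:
  assumes A: "ideal A R" and r: "r \<in> carrier R" "r \<in> radical R A"
    and y: "y \<in> carrier R" "r = r \<otimes> r \<otimes> y"
  shows "r \<in> A"
proof -
  have r_eq: "r = r [^] Suc n \<otimes> y [^] n" for n
  proof (induct n)
    case (Suc n)
    have "r [^] Suc (Suc n) \<otimes> y [^] Suc n = (r [^] Suc n \<otimes> y [^] n) \<otimes> (r \<otimes> y)"
      using r y by (simp add: m_ac)
    also have "\<dots> = r"
      using Suc r y by (simp flip: m_assoc)
    finally show ?case by simp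
  qed (use r in simp)
  obtain k :: nat where "r [^] k \<in> A"
    using r unfolding radical_def by blast
  then have "r [^] Suc k \<otimes> y [^] k \<in> A"
    using r y by (simp add: ideal.I_r_closed[OF A])
  then show ?thesis
    using r_eq by metis
qed

lemma radical_subset_of_von_neumann_regular:
  assumes "von_neumann_regular R" and "ideal A R"
  shows "radical R A \<subseteq> A"
proof
  fix r assume r: "r \<in> radical R A"
  then have "r \<in> carrier R" unfolding radical_def by blast
  with assms(1) obtain y where "y \<in> carrier R" "r = r \<otimes> r \<otimes> y"
    unfolding von_neumann_regular_def by blast
  then show "r \<in> A"
    using regular_mem_radical_imp_mem[OF assms(2)] r \<open>r \<in> carrier R\<close> by blast
qed

lemma subset_of_generated_by_idempotents:
  assumes "generated_by_idempotents R I" and A: "ideal A R" and "I \<subseteq> radical R A"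
  shows "I \<subseteq> A"
proof -
  obtain E where E: "E \<subseteq> carrier R" "\<forall>e\<in>E. e \<otimes> e = e" and I: "I = Idl E"
    using assms(1) unfolding generated_by_idempotents_def by blast
  have "E \<subseteq> A"
  proof
    fix e assume "e \<in> E"
    then have "e \<in> radical R A"
      using assms(3) genideal_self[OF E(1)] I by blast
    then show "e \<in> A"
      using regular_mem_radical_imp_mem[OF A, of e \<one>] E \<open>e \<in> E\<close> by auto
  qed
  then show ?thesis
    using I genideal_minimal[OF A] by simp
qed

lemma ideal_power_subset_of_finitely_generated_power:
  assumes I: "ideal I R" and "1 \<le> n" and "finitely_generated_ideal R (ideal_power R I n)"
    and A: "ideal A R" and "I \<subseteq> radical R A"
  shows "\<exists>N. ideal_power R I N \<subseteq> A"
proof -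
  obtain S where S: "S \<subseteq> carrier R" "finite S" and In: "ideal_power R I n = Idl S"
    using assms(3) unfolding finitely_generated_ideal_def by blast
  have "S \<subseteq> ideal_power R I 1"
    using genideal_self[OF S(1)] In ideal_power_antimono[OF I \<open>1 \<le> n\<close>] by blast
  then obtain N where "ideal_power R (Idl S) N \<subseteq> A"
    using genideal_power_subset_of_radical[OF A S(2,1)] assms(5) ideal_power_1[OF I] by auto
  then show ?thesis
    using ideal_power_mult[OF I, of n N] In by auto
qed

lemma ideal_power_subset_of_noetherian:
  assumes "noetherian_ring R" and I: "ideal I R" and A: "ideal A R" and "I \<subseteq> radical R A"
  shows "\<exists>N. ideal_power R I N \<subseteq> A"
proof -
  obtain S where "S \<subseteq> carrier R" "finite S" "I = Idl S"
    using noetherian_ring.finetely_gen[OF assms(1) I] by blast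
  then show ?thesis
    using genideal_power_subset_of_radical[OF A] genideal_self assms(4) by blast
qed

end

context module
begin

lemma annihilator_is_ideal:
  assumes x: "x \<in> carrier M"
  shows "ideal (annihilator R M x) R"
proof (rule idealI)
  show "subgroup (annihilator R M x) (add_monoid R)"
    by (rule subgroup.intro) (auto simp: annihilator_def x smult_l_distr smult_l_minus simp flip: a_inv_def)
  fix a r assume "a \<in> annihilator R M x" "r \<in> carrier R"
  then show "r \<otimes> a \<in> annihilator R M x" and "a \<otimes> r \<in> annihilator R M x"
    by (auto simp: annihilator_def x smult_assoc1 m_comm[of a r])
qed (rule R.ring_axioms)

lemma Gamma_subset_Gamma_bar:
  assumes I: "ideal I R"
  shows "Gamma R I M \<subseteq> Gamma_bar R I M"
proof
  fix x assume "x \<in> Gamma R I M"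
  then obtain n where x: "x \<in> carrier M" and n: "ideal_power R I n \<subseteq> annihilator R M x"
    unfolding Gamma_def by blast
  have "I \<subseteq> radical R (annihilator R M x)"
    using nat_pow_mem_ideal_power[OF I] n ideal.Icarr[OF I] unfolding radical_def by blast
  with x show "x \<in> Gamma_bar R I M"
    unfolding Gamma_bar_def by blast
qed

lemma Gamma_eq_Gamma_barI:
  assumes "ideal I R"
    and "\<And>x. x \<in> carrier M \<Longrightarrow> I \<subseteq> radical R (annihilator R M x) \<Longrightarrow>
           \<exists>n. ideal_power R I n \<subseteq> annihilator R M x"
  shows "Gamma R I M = Gamma_bar R I M"
  using Gamma_subset_Gamma_bar[OF assms(1)] assms(2)
  unfolding Gamma_def Gamma_bar_def by blast

lemma Gamma_eq_Gamma_bar_of_power_bound: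
  assumes "ideal I R"
    and "\<And>A. ideal A R \<Longrightarrow> I \<subseteq> radical R A \<Longrightarrow> \<exists>n. ideal_power R I n \<subseteq> A"
  shows "Gamma R I M = Gamma_bar R I M"
  using assms by (intro Gamma_eq_Gamma_barI) (auto intro: annihilator_is_ideal)

lemma Gamma_eq_Gamma_bar_of_radical_between:
  assumes I: "ideal I R" and "I \<subseteq> J" and J: "J \<subseteq> radical R I"
    and "Gamma R J M = Gamma_bar R J M"
  shows "Gamma R I M = Gamma_bar R I M"
proof -
  have "Gamma_bar R I M \<subseteq> Gamma_bar R J M"
    using order_trans[OF J radical_mono] radical_radical_subset
    unfolding Gamma_bar_def by blast
  moreover have "Gamma R J M \<subseteq> Gamma R I M"
    unfolding Gamma_def using ideal_power_mono[OF \<open>I \<subseteq> J\<close>] by blast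
  ultimately show ?thesis
    using Gamma_subset_Gamma_bar[OF I] assms(4) by blast
qed

lemma submodule_smult_image:
  assumes I: "ideal I R" and x: "x \<in> carrier M"
  shows "submodule ((\<lambda>r. r \<odot>\<^bsub>M\<^esub> x) ` I) R M"
proof (rule submoduleI)
  interpret I: ideal I R by (rule I)
  show "(\<lambda>r. r \<odot>\<^bsub>M\<^esub> x) ` I \<subseteq> carrier M"
    using x by auto
  show "\<zero>\<^bsub>M\<^esub> \<in> (\<lambda>r. r \<odot>\<^bsub>M\<^esub> x) ` I"
    using x by (intro image_eqI[of _ _ \<zero>]) simp_all
  fix a b assume "a \<in> (\<lambda>r. r \<odot>\<^bsub>M\<^esub> x) ` I"
  then obtain r where r: "r \<in> I" "r \<in> carrier R" and a: "a = r \<odot>\<^bsub>M\<^esub> x" by auto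
  show "\<ominus>\<^bsub>M\<^esub> a \<in> (\<lambda>r. r \<odot>\<^bsub>M\<^esub> x) ` I"
    unfolding a using r x by (intro image_eqI[of _ _ "\<ominus> r"]) (simp_all add: smult_l_minus)
  show "c \<odot>\<^bsub>M\<^esub> a \<in> (\<lambda>r. r \<odot>\<^bsub>M\<^esub> x) ` I" if "c \<in> carrier R" for c
    unfolding a using r x that
    by (intro image_eqI[of _ _ "c \<otimes> r"]) (simp_all add: smult_assoc1 I.I_l_closed)
  assume "b \<in> (\<lambda>r. r \<odot>\<^bsub>M\<^esub> x) ` I"
  then obtain s where s: "s \<in> I" "s \<in> carrier R" and b: "b = s \<odot>\<^bsub>M\<^esub> x" by auto
  show "a \<oplus>\<^bsub>M\<^esub> b \<in> (\<lambda>r. r \<odot>\<^bsub>M\<^esub> x) ` I"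
    unfolding a b using r s x by (intro image_eqI[of _ _ "r \<oplus> s"]) (simp_all add: smult_l_distr)
qed

lemma subset_set_add_annihilator:
  assumes "I \<subseteq> carrier R" and J: "ideal J R" and x: "x \<in> carrier M"
    and IJ: "(\<lambda>r. r \<odot>\<^bsub>M\<^esub> x) ` I \<subseteq> (\<lambda>r. r \<odot>\<^bsub>M\<^esub> x) ` J"
  shows "I \<subseteq> J <+>\<^bsub>R\<^esub> annihilator R M x"
proof
  fix r assume "r \<in> I"
  then have r: "r \<in> carrier R" using assms(1) by blast
  obtain j where j: "j \<in> J" "r \<odot>\<^bsub>M\<^esub> x = j \<odot>\<^bsub>M\<^esub> x"
    using IJ \<open>r \<in> I\<close> by blast
  then have jc: "j \<in> carrier R" using ideal.Icarr[OF J] by blast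
  have "(r \<ominus> j) \<odot>\<^bsub>M\<^esub> x = \<zero>\<^bsub>M\<^esub>"
    using r jc x j(2) by (simp add: a_minus_def smult_l_distr smult_l_minus M.r_neg)
  then have "r \<ominus> j \<in> annihilator R M x"
    unfolding annihilator_def using r jc by simp
  moreover have "r = j \<oplus> (r \<ominus> j)"
    using r jc by (simp add: a_minus_def R.a_lcomm[of j r] R.r_neg)
  ultimately show "r \<in> J <+>\<^bsub>R\<^esub> annihilator R M x"
    using j(1) unfolding set_add_def' by blast
qed

lemma Gamma_eq_Gamma_bar_of_noetherian:
  assumes noeth: "noetherian_module R M" and I: "ideal I R"
  shows "Gamma R I M = Gamma_bar R I M"
proof (rule Gamma_eq_Gamma_barI[OF I])
  fix x assume x: "x \<in> carrier M" and rad: "I \<subseteq> radical R (annihilator R M x)"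
  let ?A = "annihilator R M x" and ?Ix = "\<lambda>J. (\<lambda>r. r \<odot>\<^bsub>M\<^esub> x) ` J"
  have A: "ideal ?A R" by (rule annihilator_is_ideal[OF x])
  have Ic: "I \<subseteq> carrier R" using ideal.Icarr[OF I] by blast
  obtain S where S: "finite S" and IS: "?Ix I = gen_submodule R M S"
    using noeth submodule_smult_image[OF I x] unfolding noetherian_module_def by blast
  have "S \<subseteq> ?Ix I"
    unfolding IS gen_submodule_def by blast
  then obtain T where T: "T \<subseteq> I" "finite T" and ST: "S = ?Ix T"
    using finite_subset_image[OF S] by blast
  have Tc: "T \<subseteq> carrier R" using T Ic by blast
  have J: "ideal (Idl T) R" by (rule genideal_ideal[OF Tc])
  obtain N where N: "ideal_power R (Idl T) N \<subseteq> ?A"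
    using genideal_power_subset_of_radical[OF A T(2) Tc] T rad by blast
  have "S \<subseteq> ?Ix (Idl T)"
    unfolding ST using genideal_self[OF Tc] by blast
  then have "?Ix I \<subseteq> ?Ix (Idl T)"
    unfolding IS gen_submodule_def using submodule_smult_image[OF J x] by blast
  then have "I \<subseteq> Idl T <+>\<^bsub>R\<^esub> ?A"
    by (rule subset_set_add_annihilator[OF Ic J x])
  moreover have "ideal_power R (Idl T <+>\<^bsub>R\<^esub> ?A) (N + 1) \<subseteq> ?A"
    by (rule ideal_power_set_add_subset[OF J A A N equalityD1[OF ideal_power_1[OF A]]])
  ultimately show "\<exists>n. ideal_power R I n \<subseteq> ?A"
    using ideal_power_mono by blast
qed

end

theorem corollary4p6:
  fixes R :: "('a, 'c) ring_scheme" and a :: "'a set"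
  assumes "cring R" and "ideal a R"
  shows
   "((\<exists>n::nat. n \<ge> 1 \<and> finitely_generated_ideal R (ideal_power R a n))
        \<or> generated_by_idempotents R a
      \<longrightarrow> (\<forall>M :: ('a, 'm) module. module R M \<longrightarrow> Gamma R a M = Gamma_bar R a M))
    \<and> (noetherian_ring R \<or> von_neumann_regular R
      \<longrightarrow> (\<forall>M :: ('a, 'm) module. module R M \<longrightarrow> Gamma R a M = Gamma_bar R a M))
    \<and> (\<forall>b. ideal b R \<and> a \<subseteq> b \<and> b \<subseteq> radical R a
        \<and> (\<forall>M :: ('a, 'm) module. module R M \<longrightarrow> Gamma R b M = Gamma_bar R b M)
      \<longrightarrow> (\<forall>M :: ('a, 'm) module. module R M \<longrightarrow> Gamma R a M = Gamma_bar R a M))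
    \<and> (\<forall>M :: ('a, 'm) module. noetherian_module R M \<longrightarrow> Gamma R a M = Gamma_bar R a M)"
proof -
  interpret cring R by fact
  note I = \<open>ideal a R\<close>
  have power_bound: "\<exists>n. ideal_power R a n \<subseteq> A"
    if "(\<exists>n. 1 \<le> n \<and> finitely_generated_ideal R (ideal_power R a n))
        \<or> generated_by_idempotents R a \<or> noetherian_ring R \<or> von_neumann_regular R"
      and A: "ideal A R" and rad: "a \<subseteq> radical R A" for A
    using that(1)
  proof (elim disjE exE conjE)
    fix n assume "1 \<le> n" "finitely_generated_ideal R (ideal_power R a n)"
    then show ?thesis
      by (rule ideal_power_subset_of_finitely_generated_power[OF I _ _ A rad])
  next
    assume "generated_by_idempotents R a"
    then show ?thesis
      using subset_of_generated_by_idempotents[OF _ A rad] ideal_power_1[OF I] by auto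
  next
    assume "noetherian_ring R"
    then show ?thesis
      by (rule ideal_power_subset_of_noetherian[OF _ I A rad])
  next
    assume "von_neumann_regular R"
    then show ?thesis
      using radical_subset_of_von_neumann_regular[OF _ A] rad ideal_power_1[OF I] by auto
  qed
  have "Gamma R a M = Gamma_bar R a M"
    if "module R M" and "(\<exists>n. 1 \<le> n \<and> finitely_generated_ideal R (ideal_power R a n))
        \<or> generated_by_idempotents R a \<or> noetherian_ring R \<or> von_neumann_regular R"
    for M :: "('a, 'm) module"
    using module.Gamma_eq_Gamma_bar_of_power_bound[OF that(1) I power_bound[OF that(2)]] .
  moreover have "Gamma R a M = Gamma_bar R a M"
    if "module R M" "a \<subseteq> b" "b \<subseteq> radical R a" "Gamma R b M = Gamma_bar R b M"
    for M :: "('a, 'm) module" and b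
    by (rule module.Gamma_eq_Gamma_bar_of_radical_between[OF that(1) I that(2-4)])
  moreover have "Gamma R a M = Gamma_bar R a M" if "noetherian_module R M"
    for M :: "('a, 'm) module"
    using module.Gamma_eq_Gamma_bar_of_noetherian[OF _ that I] that
    unfolding noetherian_module_def by blast
  ultimately show ?thesis
    by blast
qed

end
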